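(* Let $R$ be a simple ring, $\delta$ a derivation of $R$, and $S=R[x;\delta]$ the differential polynomial ring. If $S$ is left quasi-duo or right quasi-duo, then $R$ is a field and $\delta=0$.
   Context: All rings are unital and associative. A derivation of $R$ is an additive map $\delta:R\to R$ with $\delta(rs)=r\delta(s)+\delta(r)s$. The differential polynomial ring $R[x;\delta]$ is, as a left $R$-module, the polynomial ring $R[x]$, with multiplication determined by $xr=rx+\delta(r)$ for $r\in R$. A ring is left (right) quasi-duo if every maximal left (right) ideal is two-sided. *)

theory Defs
  imports "HOL-Algebra.Algebra"
begin

definition simple_ring :: "('a, 'm) ring_scheme \<Rightarrow> bool" where
  "simple_ring R \<longleftrightarrow> ring R \<and> carrier R \<noteq> {\<zero>\<^bsub>R\<^esub>} \<and>
     (\<forall>I. ideal I R \<longrightarrow> I = {\<zero>\<^bsub>R\<^esub>} \<or> I = carrier R)"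

definition derivation :: "('a, 'm) ring_scheme \<Rightarrow> ('a \<Rightarrow> 'a) \<Rightarrow> bool" where
  "derivation R \<delta> \<longleftrightarrow> \<delta> \<in> carrier R \<rightarrow> carrier R \<and>
     (\<forall>r\<in>carrier R. \<forall>s\<in>carrier R. \<delta> (r \<oplus>\<^bsub>R\<^esub> s) = \<delta> r \<oplus>\<^bsub>R\<^esub> \<delta> s) \<and>
     (\<forall>r\<in>carrier R. \<forall>s\<in>carrier R.
        \<delta> (r \<otimes>\<^bsub>R\<^esub> s) = r \<otimes>\<^bsub>R\<^esub> \<delta> s \<oplus>\<^bsub>R\<^esub> \<delta> r \<otimes>\<^bsub>R\<^esub> s)"

definition left_ideal :: "'a set \<Rightarrow> ('a, 'm) ring_scheme \<Rightarrow> bool" where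
  "left_ideal I R \<longleftrightarrow> additive_subgroup I R \<and>
     (\<forall>a\<in>carrier R. \<forall>y\<in>I. a \<otimes>\<^bsub>R\<^esub> y \<in> I)"

definition right_ideal :: "'a set \<Rightarrow> ('a, 'm) ring_scheme \<Rightarrow> bool" where
  "right_ideal I R \<longleftrightarrow> additive_subgroup I R \<and>
     (\<forall>a\<in>carrier R. \<forall>y\<in>I. y \<otimes>\<^bsub>R\<^esub> a \<in> I)"

definition maximal_left_ideal :: "'a set \<Rightarrow> ('a, 'm) ring_scheme \<Rightarrow> bool" where
  "maximal_left_ideal I R \<longleftrightarrow> left_ideal I R \<and> I \<noteq> carrier R \<and>
     (\<forall>J. left_ideal J R \<and> I \<subseteq> J \<longrightarrow> J = I \<or> J = carrier R)"

definition maximal_right_ideal :: "'a set \<Rightarrow> ('a, 'm) ring_scheme \<Rightarrow> bool" where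
  "maximal_right_ideal I R \<longleftrightarrow> right_ideal I R \<and> I \<noteq> carrier R \<and>
     (\<forall>J. right_ideal J R \<and> I \<subseteq> J \<longrightarrow> J = I \<or> J = carrier R)"

definition left_quasi_duo :: "('a, 'm) ring_scheme \<Rightarrow> bool" where
  "left_quasi_duo R \<longleftrightarrow> (\<forall>I. maximal_left_ideal I R \<longrightarrow> ideal I R)"

definition right_quasi_duo :: "('a, 'm) ring_scheme \<Rightarrow> bool" where
  "right_quasi_duo R \<longleftrightarrow> (\<forall>I. maximal_right_ideal I R \<longrightarrow> ideal I R)"

text \<open>S (with embedding \<iota> of R and distinguished element x) is the differential
  polynomial ring R[x;\<delta>]: a ring which is a free left R-module with basis
  1, x, x^2, ..., and in which x r = r x + \<delta>(r).\<close>
definition diff_poly_ring ::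
  "('a, 'm) ring_scheme \<Rightarrow> ('a \<Rightarrow> 'a) \<Rightarrow> ('b, 'n) ring_scheme \<Rightarrow> ('a \<Rightarrow> 'b) \<Rightarrow> 'b \<Rightarrow> bool" where
  "diff_poly_ring R \<delta> S \<iota> x \<longleftrightarrow> ring R \<and> ring S \<and> \<iota> \<in> ring_hom R S \<and> x \<in> carrier S \<and>
     (\<forall>r\<in>carrier R. x \<otimes>\<^bsub>S\<^esub> \<iota> r = \<iota> r \<otimes>\<^bsub>S\<^esub> x \<oplus>\<^bsub>S\<^esub> \<iota> (\<delta> r)) \<and>
     (\<forall>s\<in>carrier S. \<exists>n f. f \<in> {..<n} \<rightarrow> carrier R \<and>
         s = (\<Oplus>\<^bsub>S\<^esub>i\<in>{..<n}. \<iota> (f i) \<otimes>\<^bsub>S\<^esub> x [^]\<^bsub>S\<^esub> (i::nat))) \<and>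
     (\<forall>n f. f \<in> {..<n} \<rightarrow> carrier R \<and>
         (\<Oplus>\<^bsub>S\<^esub>i\<in>{..<n}. \<iota> (f i) \<otimes>\<^bsub>S\<^esub> x [^]\<^bsub>S\<^esub> (i::nat)) = \<zero>\<^bsub>S\<^esub>
         \<longrightarrow> (\<forall>i<n. f i = \<zero>\<^bsub>R\<^esub>))"

end

theory Submission
  imports Defs
begin

text \<open>
  For r \<in> R the element x - r of S = R[x;\<delta>] has no right inverse, and no left inverse when
  \<delta>(r) = 0: comparing coefficients from the top degree down kills every coefficient of a
  would-be inverse. So if S is left or right quasi-duo, x - r lies in a maximal one-sided ideal,
  which is a proper two-sided ideal M. Its contraction M \<inter> R is a proper ideal of the simple
  ring R, hence 0. The commutator of x - r with s \<in> R is \<delta>(s) - (rs - sr) \<in> M \<inter> R, so \<delta> is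
  the inner derivation of r. For r = 0 this gives \<delta> = 0; then every r commutes with every s,
  and a simple commutative ring is a field.
\<close>

definition opposite_ring :: "('a, 'm) ring_scheme \<Rightarrow> ('a, 'm) ring_scheme" where
  "opposite_ring R = R\<lparr>mult := \<lambda>a b. b \<otimes>\<^bsub>R\<^esub> a\<rparr>"

lemma opposite_ring_simps [simp]:
  "carrier (opposite_ring R) = carrier R"
  "a \<otimes>\<^bsub>opposite_ring R\<^esub> b = b \<otimes>\<^bsub>R\<^esub> a"
  "\<one>\<^bsub>opposite_ring R\<^esub> = \<one>\<^bsub>R\<^esub>"
  "(\<oplus>\<^bsub>opposite_ring R\<^esub>) = (\<oplus>\<^bsub>R\<^esub>)"
  "\<zero>\<^bsub>opposite_ring R\<^esub> = \<zero>\<^bsub>R\<^esub>"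
  by (simp_all add: opposite_ring_def)

lemma (in ring) ring_opposite_ring: "ring (opposite_ring R)"
proof -
  have "abelian_group (opposite_ring R)"
    using is_abelian_group unfolding abelian_group_def abelian_monoid_def abelian_group_axioms_def by simp
  moreover have "monoid (opposite_ring R)"
    by (rule monoidI) (auto simp: m_assoc)
  ultimately show ?thesis
    unfolding ring_def ring_axioms_def
    by (auto simp: l_distr r_distr opposite_ring_def)
qed

lemma left_ideal_opposite_ring_iff [simp]:
  "left_ideal I (opposite_ring R) \<longleftrightarrow> right_ideal I R"
  by (simp add: left_ideal_def right_ideal_def additive_subgroup_def)

lemma maximal_left_ideal_opposite_ring_iff [simp]:
  "maximal_left_ideal I (opposite_ring R) \<longleftrightarrow> maximal_right_ideal I R"
  by (simp add: maximal_left_ideal_def maximal_right_ideal_def)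

lemma (in ring) ideal_opposite_ring_iff [simp]:
  "ideal I (opposite_ring R) \<longleftrightarrow> ideal I R"
  using ring_opposite_ring ring_axioms
  by (auto simp: ideal_def ideal_axioms_def additive_subgroup_def)

lemma (in ring) left_quasi_duo_opposite_ring_iff:
  "left_quasi_duo (opposite_ring R) \<longleftrightarrow> right_quasi_duo R"
  by (simp add: left_quasi_duo_def right_quasi_duo_def)

lemma (in ring) left_ideal_eq_carrier:
  assumes "left_ideal J R" and "\<one> \<in> J"
  shows "J = carrier R"
proof
  show "J \<subseteq> carrier R"
    using assms(1) additive_subgroup.a_subset unfolding left_ideal_def by blast
  show "carrier R \<subseteq> J"
  proof
    fix s assume "s \<in> carrier R"
    then have "s \<otimes> \<one> \<in> J" using assms unfolding left_ideal_def by blast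
    then show "s \<in> J" using \<open>s \<in> carrier R\<close> by simp
  qed
qed

lemma (in ring) left_ideal_left_multiples:
  assumes "a \<in> carrier R"
  shows "left_ideal ((\<lambda>s. s \<otimes> a) ` carrier R) R"
  unfolding left_ideal_def
proof (intro conjI ballI additive_subgroupI subgroup.intro)
  fix u v assume "u \<in> (\<lambda>s. s \<otimes> a) ` carrier R" "v \<in> (\<lambda>s. s \<otimes> a) ` carrier R"
  then show "u \<otimes>\<^bsub>add_monoid R\<^esub> v \<in> (\<lambda>s. s \<otimes> a) ` carrier R"
    using assms by (auto simp: l_distr[symmetric] intro!: image_eqI)
next
  fix u assume "u \<in> (\<lambda>s. s \<otimes> a) ` carrier R"
  then show "inv\<^bsub>add_monoid R\<^esub> u \<in> (\<lambda>s. s \<otimes> a) ` carrier R"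
    using assms by (auto simp: a_inv_def[symmetric] l_minus[symmetric] intro!: image_eqI)
next
  fix b u assume "b \<in> carrier R" "u \<in> (\<lambda>s. s \<otimes> a) ` carrier R"
  then show "b \<otimes> u \<in> (\<lambda>s. s \<otimes> a) ` carrier R"
    using assms by (auto simp: m_assoc[symmetric] intro!: image_eqI)
qed (use assms in \<open>auto intro!: image_eqI[where x = \<zero>]\<close>)

lemma (in ring) left_ideal_Union_chain:
  assumes "C \<noteq> {}" and "subset.chain {J. left_ideal J R} C"
  shows "left_ideal (\<Union>C) R"
proof -
  have ideals: "\<And>J. J \<in> C \<Longrightarrow> left_ideal J R"
    and chain: "\<And>J K. J \<in> C \<Longrightarrow> K \<in> C \<Longrightarrow> J \<subseteq> K \<or> K \<subseteq> J"
    using assms(2) unfolding subset.chain_def by auto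
  then have subgroups: "\<And>J. J \<in> C \<Longrightarrow> subgroup J (add_monoid R)"
    unfolding left_ideal_def additive_subgroup_def by blast
  show ?thesis
    unfolding left_ideal_def
  proof (intro conjI ballI additive_subgroupI subgroup.intro)
    show "\<Union>C \<subseteq> carrier (add_monoid R)"
      using subgroups subgroup.subset by blast
    show "\<one>\<^bsub>add_monoid R\<^esub> \<in> \<Union>C"
      using assms(1) subgroups subgroup.one_closed by blast
  next
    fix u assume "u \<in> \<Union>C"
    then obtain J where "J \<in> C" "u \<in> J" by blast
    then have "inv\<^bsub>add_monoid R\<^esub> u \<in> J"
      using subgroup.m_inv_closed[OF subgroups] by blast
    then show "inv\<^bsub>add_monoid R\<^esub> u \<in> \<Union>C" using \<open>J \<in> C\<close> by blast
  next
    fix u v assume "u \<in> \<Union>C" "v \<in> \<Union>C"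
    then obtain J K where JK: "J \<in> C" "K \<in> C" "u \<in> J" "v \<in> K" by blast
    then consider "u \<in> K" | "v \<in> J" using chain by blast
    then have "u \<otimes>\<^bsub>add_monoid R\<^esub> v \<in> J \<or> u \<otimes>\<^bsub>add_monoid R\<^esub> v \<in> K"
      using subgroup.m_closed[OF subgroups[OF \<open>J \<in> C\<close>]] subgroup.m_closed[OF subgroups[OF \<open>K \<in> C\<close>]] JK
      by cases auto
    then show "u \<otimes>\<^bsub>add_monoid R\<^esub> v \<in> \<Union>C" using JK by blast
  next
    fix b u assume "b \<in> carrier R" "u \<in> \<Union>C"
    then show "b \<otimes> u \<in> \<Union>C"
      using ideals unfolding left_ideal_def by blast
  qed
qed

lemma (in ring) maximal_left_ideal_containing:
  assumes "a \<in> carrier R" and "\<forall>s\<in>carrier R. s \<otimes> a \<noteq> \<one>"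
  obtains M where "maximal_left_ideal M R" and "a \<in> M"
proof -
  define A where "A = {J. left_ideal J R \<and> a \<in> J \<and> \<one> \<notin> J}"
  have "(\<lambda>s. s \<otimes> a) ` carrier R \<in> A"
  proof -
    have "a = \<one> \<otimes> a" using assms(1) by simp
    then have "a \<in> (\<lambda>s. s \<otimes> a) ` carrier R" by (rule image_eqI) simp
    moreover have "\<one> \<notin> (\<lambda>s. s \<otimes> a) ` carrier R" using assms(2) by auto
    ultimately show ?thesis
      unfolding A_def using left_ideal_left_multiples[OF assms(1)] by simp
  qed
  moreover have "\<Union>C \<in> A" if "C \<noteq> {}" and "subset.chain A C" for C
  proof -
    have "C \<subseteq> A" and "subset.chain {J. left_ideal J R} C"
      using that(2) unfolding A_def subset.chain_def by auto
    then show ?thesis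
      using left_ideal_Union_chain[OF that(1)] that(1) unfolding A_def by auto
  qed
  ultimately obtain M where M: "M \<in> A" and maximal: "\<And>J. J \<in> A \<Longrightarrow> M \<subseteq> J \<Longrightarrow> J = M"
    using subset_Zorn_nonempty[of A] by blast
  have "maximal_left_ideal M R"
    unfolding maximal_left_ideal_def
  proof (intro conjI allI impI)
    show "left_ideal M R" and "M \<noteq> carrier R" using M unfolding A_def by auto
    fix J assume J: "left_ideal J R \<and> M \<subseteq> J"
    show "J = M \<or> J = carrier R"
    proof (cases "\<one> \<in> J")
      case True
      then show ?thesis using J left_ideal_eq_carrier by blast
    next
      case False
      then have "J \<in> A" using J M unfolding A_def by blast
      then show ?thesis using J maximal by blast
    qed
  qed
  moreover have "a \<in> M" using M unfolding A_def by blast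
  ultimately show ?thesis by (rule that)
qed

lemma (in ring) left_quasi_duo_proper_ideal_containing:
  assumes "left_quasi_duo R" and "a \<in> carrier R" and "\<forall>s\<in>carrier R. s \<otimes> a \<noteq> \<one>"
  obtains M where "ideal M R" and "a \<in> M" and "\<one> \<notin> M"
proof -
  obtain M where M: "maximal_left_ideal M R" "a \<in> M"
    using maximal_left_ideal_containing assms(2,3) by blast
  have "ideal M R" using M(1) assms(1) unfolding left_quasi_duo_def by blast
  moreover have "\<one> \<notin> M"
    using M(1) left_ideal_eq_carrier unfolding maximal_left_ideal_def by blast
  ultimately show ?thesis using M(2) that by blast
qed

lemma (in ring) right_quasi_duo_proper_ideal_containing:
  assumes "right_quasi_duo R" and "a \<in> carrier R" and "\<forall>s\<in>carrier R. a \<otimes> s \<noteq> \<one>"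
  obtains M where "ideal M R" and "a \<in> M" and "\<one> \<notin> M"
proof -
  interpret opposite: ring "opposite_ring R" by (rule ring_opposite_ring)
  obtain M where "ideal M (opposite_ring R)" "a \<in> M" "\<one> \<notin> M"
    using opposite.left_quasi_duo_proper_ideal_containing[of a] assms
    by (auto simp: left_quasi_duo_opposite_ring_iff)
  then show ?thesis using that by simp
qed

lemma (in ring_hom_ring) simple_ring_vimage_proper_ideal:
  assumes "simple_ring R" and "ideal M S" and "\<one>\<^bsub>S\<^esub> \<notin> M"
    and "a \<in> carrier R" and "h a \<in> M"
  shows "a = \<zero>"
proof -
  have "ideal {r \<in> carrier R. h r \<in> M} R"
    using ideal_vimage[OF assms(2)] .
  moreover have "{r \<in> carrier R. h r \<in> M} \<noteq> carrier R"
    using assms(3) R.one_closed by force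
  ultimately have "{r \<in> carrier R. h r \<in> M} = {\<zero>}"
    using assms(1) unfolding simple_ring_def by blast
  then show ?thesis using assms(4,5) by blast
qed

lemma simple_commutative_ring_is_field:
  assumes "simple_ring R"
    and "\<And>a b. a \<in> carrier R \<Longrightarrow> b \<in> carrier R \<Longrightarrow> a \<otimes>\<^bsub>R\<^esub> b = b \<otimes>\<^bsub>R\<^esub> a"
  shows "field R"
proof -
  interpret ring R using assms(1) unfolding simple_ring_def by blast
  have "cring R"
    by (rule cringI[OF is_abelian_group monoid_comm_monoidI l_distr]) (use assms(2) in auto)
  then show ?thesis
    using assms(1) zeroideal oneideal unfolding simple_ring_def
    by (intro cring.trivialideals_fieldI) auto
qed

locale differential_polynomial_ring = ring_hom_ring R S \<iota>
  for R :: "('a, 'm) ring_scheme" (structure) and S :: "('b, 'n) ring_scheme" (structure)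
    and \<iota> :: "'a \<Rightarrow> 'b" +
  fixes \<delta> :: "'a \<Rightarrow> 'a" and x :: 'b
  assumes derivation: "derivation R \<delta>"
    and diff_poly_ring: "diff_poly_ring R \<delta> S \<iota> x"
begin

lemma x_closed [simp]: "x \<in> carrier S"
  using diff_poly_ring unfolding diff_poly_ring_def by blast

lemma x_commute: "r \<in> carrier R \<Longrightarrow> x \<otimes>\<^bsub>S\<^esub> \<iota> r = \<iota> r \<otimes>\<^bsub>S\<^esub> x \<oplus>\<^bsub>S\<^esub> \<iota> (\<delta> r)"
  using diff_poly_ring unfolding diff_poly_ring_def by blast

lemma delta_closed [simp]: "r \<in> carrier R \<Longrightarrow> \<delta> r \<in> carrier R"
  using derivation unfolding derivation_def by blast

lemma delta_zero [simp]: "\<delta> \<zero> = \<zero>"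
proof -
  have "\<delta> (\<zero> \<oplus> \<zero>) = \<delta> \<zero> \<oplus> \<delta> \<zero>"
    using derivation unfolding derivation_def by blast
  then have "\<delta> \<zero> \<oplus> \<delta> \<zero> = \<delta> \<zero> \<oplus> \<zero>"
    by simp
  then show ?thesis by (simp add: R.add.l_cancel)
qed

definition polysum :: "(nat \<Rightarrow> 'a) \<Rightarrow> nat \<Rightarrow> 'b" where
  "polysum f n = (\<Oplus>\<^bsub>S\<^esub>i\<in>{..<n}. \<iota> (f i) \<otimes>\<^bsub>S\<^esub> x [^]\<^bsub>S\<^esub> i)"

lemma polysum_closed [simp]: "f \<in> UNIV \<rightarrow> carrier R \<Longrightarrow> polysum f n \<in> carrier S"
  unfolding polysum_def by (auto simp: Pi_iff intro!: S.finsum_closed)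

lemma polysum_0 [simp]: "polysum f 0 = \<zero>\<^bsub>S\<^esub>"
  unfolding polysum_def by simp

lemma polysum_Suc:
  "f \<in> UNIV \<rightarrow> carrier R \<Longrightarrow> polysum f (Suc n) = polysum f n \<oplus>\<^bsub>S\<^esub> \<iota> (f n) \<otimes>\<^bsub>S\<^esub> x [^]\<^bsub>S\<^esub> n"
  unfolding polysum_def by (simp add: lessThan_Suc S.finsum_insert S.a_comm S.finsum_closed Pi_def)

lemma polysum_Suc_zero:
  "f \<in> UNIV \<rightarrow> carrier R \<Longrightarrow> f n = \<zero> \<Longrightarrow> polysum f (Suc n) = polysum f n"
  by (simp add: polysum_Suc)

lemma polysum_add:
  assumes "f \<in> UNIV \<rightarrow> carrier R" and "g \<in> UNIV \<rightarrow> carrier R"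
  shows "polysum (\<lambda>i. f i \<oplus> g i) n = polysum f n \<oplus>\<^bsub>S\<^esub> polysum g n"
proof (induction n)
  case (Suc n)
  have "(\<lambda>i. f i \<oplus> g i) \<in> UNIV \<rightarrow> carrier R" using assms by auto
  with Suc assms show ?case
    by (simp add: polysum_Suc S.l_distr S.a_ac Pi_iff)
qed simp

lemma polysum_neg:
  assumes "f \<in> UNIV \<rightarrow> carrier R"
  shows "polysum (\<lambda>i. \<ominus> f i) n = \<ominus>\<^bsub>S\<^esub> polysum f n"
proof (induction n)
  case (Suc n)
  have "(\<lambda>i. \<ominus> f i) \<in> UNIV \<rightarrow> carrier R" using assms by auto
  with Suc assms show ?case
    by (simp add: polysum_Suc hom_a_inv S.l_minus S.minus_add Pi_iff)
qed simp

lemma polysum_minus: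
  assumes "f \<in> UNIV \<rightarrow> carrier R" and "g \<in> UNIV \<rightarrow> carrier R"
  shows "polysum (\<lambda>i. f i \<ominus> g i) n = polysum f n \<ominus>\<^bsub>S\<^esub> polysum g n"
  using assms polysum_add[of f "\<lambda>i. \<ominus> g i"] polysum_neg[of g]
  by (simp add: R.minus_eq S.minus_eq Pi_iff)

lemma polysum_coeff_eq:
  assumes "f \<in> UNIV \<rightarrow> carrier R" and "g \<in> UNIV \<rightarrow> carrier R"
    and "polysum f n = polysum g n" and "i < n"
  shows "f i = g i"
proof -
  have "polysum (\<lambda>i. f i \<ominus> g i) n = \<zero>\<^bsub>S\<^esub>"
    using assms by (simp add: polysum_minus)
  moreover have "(\<lambda>i. f i \<ominus> g i) \<in> {..<n} \<rightarrow> carrier R"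
    using assms by auto
  ultimately have "f i \<ominus> g i = \<zero>"
    using diff_poly_ring assms(4) unfolding diff_poly_ring_def polysum_def by blast
  then show ?thesis
    using assms by (simp add: Pi_iff)
qed

lemma polysum_unit: "polysum (\<lambda>i. if i = 0 then \<one> else \<zero>) (Suc n) = \<one>\<^bsub>S\<^esub>"
  by (induction n) (simp_all add: polysum_Suc_zero polysum_Suc)

definition shift :: "(nat \<Rightarrow> 'a) \<Rightarrow> nat \<Rightarrow> 'a" where
  "shift f i = (case i of 0 \<Rightarrow> \<zero> | Suc j \<Rightarrow> f j)"

lemma shift_simps [simp]: "shift f 0 = \<zero>" "shift f (Suc i) = f i"
  by (simp_all add: shift_def)

lemma shift_closed [simp]: "f \<in> UNIV \<rightarrow> carrier R \<Longrightarrow> shift f \<in> UNIV \<rightarrow> carrier R"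
  by (auto simp: shift_def Pi_iff split: nat.split)

lemma polysum_mult_x:
  assumes "f \<in> UNIV \<rightarrow> carrier R"
  shows "polysum f n \<otimes>\<^bsub>S\<^esub> x = polysum (shift f) (Suc n)"
proof (induction n)
  case 0
  show ?case using assms by (simp add: polysum_Suc)
next
  case (Suc n)
  with assms show ?case
    by (simp add: polysum_Suc[of f] polysum_Suc[OF shift_closed[OF assms], of "Suc n"]
        S.l_distr S.m_assoc S.nat_pow_Suc Pi_iff)
qed

lemma x_mult_polysum:
  assumes f: "f \<in> UNIV \<rightarrow> carrier R"
  shows "x \<otimes>\<^bsub>S\<^esub> polysum f n = polysum (shift f) (Suc n) \<oplus>\<^bsub>S\<^esub> polysum (\<lambda>i. \<delta> (f i)) n"
proof (induction n)
  case 0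
  show ?case using f by (simp add: polysum_Suc)
next
  case (Suc n)
  have fn: "f n \<in> carrier R" using f by auto
  have df: "(\<lambda>i. \<delta> (f i)) \<in> UNIV \<rightarrow> carrier R" using f by (auto simp: Pi_iff)
  have "x \<otimes>\<^bsub>S\<^esub> \<iota> (f n) \<otimes>\<^bsub>S\<^esub> x [^]\<^bsub>S\<^esub> n
      = \<iota> (f n) \<otimes>\<^bsub>S\<^esub> x [^]\<^bsub>S\<^esub> Suc n \<oplus>\<^bsub>S\<^esub> \<iota> (\<delta> (f n)) \<otimes>\<^bsub>S\<^esub> x [^]\<^bsub>S\<^esub> n"
    using fn by (simp add: x_commute S.l_distr S.m_assoc S.nat_pow_Suc2[symmetric])
  then show ?case
    using Suc f df fn
    by (simp add: polysum_Suc[OF f] polysum_Suc[OF shift_closed[OF f], of "Suc n"] polysum_Suc[OF df]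
        S.r_distr S.m_assoc[symmetric] S.a_ac)
qed

lemma iota_mult_polysum:
  assumes "f \<in> UNIV \<rightarrow> carrier R" and "r \<in> carrier R"
  shows "\<iota> r \<otimes>\<^bsub>S\<^esub> polysum f n = polysum (\<lambda>i. r \<otimes> f i) n"
proof (induction n)
  case (Suc n)
  have "(\<lambda>i. r \<otimes> f i) \<in> UNIV \<rightarrow> carrier R" using assms by auto
  with Suc assms show ?case
    by (simp add: polysum_Suc S.r_distr S.m_assoc Pi_iff)
qed (use assms in simp)

lemma x_pow_mult_iota:
  assumes "r \<in> carrier R" and "\<delta> r = \<zero>"
  shows "x [^]\<^bsub>S\<^esub> (n::nat) \<otimes>\<^bsub>S\<^esub> \<iota> r = \<iota> r \<otimes>\<^bsub>S\<^esub> x [^]\<^bsub>S\<^esub> n"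
proof (induction n)
  case (Suc n)
  have "x [^]\<^bsub>S\<^esub> Suc n \<otimes>\<^bsub>S\<^esub> \<iota> r = x [^]\<^bsub>S\<^esub> n \<otimes>\<^bsub>S\<^esub> (x \<otimes>\<^bsub>S\<^esub> \<iota> r)"
    using assms by (simp add: S.nat_pow_Suc S.m_assoc)
  also have "\<dots> = (x [^]\<^bsub>S\<^esub> n \<otimes>\<^bsub>S\<^esub> \<iota> r) \<otimes>\<^bsub>S\<^esub> x"
    using assms by (simp add: x_commute S.m_assoc)
  also have "\<dots> = \<iota> r \<otimes>\<^bsub>S\<^esub> x [^]\<^bsub>S\<^esub> Suc n"
    using Suc assms by (simp add: S.nat_pow_Suc S.m_assoc)
  finally show ?case .
qed (use assms in simp)

lemma polysum_mult_iota:
  assumes "f \<in> UNIV \<rightarrow> carrier R" and "r \<in> carrier R" and "\<delta> r = \<zero>"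
  shows "polysum f n \<otimes>\<^bsub>S\<^esub> \<iota> r = polysum (\<lambda>i. f i \<otimes> r) n"
proof (induction n)
  case (Suc n)
  have "(\<lambda>i. f i \<otimes> r) \<in> UNIV \<rightarrow> carrier R" using assms by auto
  with Suc assms show ?case
    by (simp add: polysum_Suc S.l_distr S.m_assoc x_pow_mult_iota Pi_iff)
qed (use assms in simp)

lemma polysum_representation:
  assumes "s \<in> carrier S"
  obtains f n where "f \<in> UNIV \<rightarrow> carrier R" and "f n = \<zero>" and "s = polysum f n"
proof -
  obtain n f where f: "f \<in> {..<n} \<rightarrow> carrier R"
    and s: "s = (\<Oplus>\<^bsub>S\<^esub>i\<in>{..<n}. \<iota> (f i) \<otimes>\<^bsub>S\<^esub> x [^]\<^bsub>S\<^esub> (i::nat))"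
    using diff_poly_ring assms unfolding diff_poly_ring_def by blast
  define g where "g i = (if i < n then f i else \<zero>)" for i
  have "g \<in> UNIV \<rightarrow> carrier R" using f by (auto simp: g_def)
  moreover have "g n = \<zero>" by (simp add: g_def)
  moreover have "s = polysum g n"
    unfolding s polysum_def using f by (intro S.finsum_cong) (auto simp: g_def Pi_iff)
  ultimately show ?thesis by (rule that)
qed

lemma shift_minus_polysum_ne_one:
  assumes f: "f \<in> UNIV \<rightarrow> carrier R" and "f n = \<zero>"
    and h: "h \<in> carrier R \<rightarrow> carrier R" and "h \<zero> = \<zero>" and "\<one> \<noteq> \<zero>"
  shows "polysum (shift f) (Suc n) \<ominus>\<^bsub>S\<^esub> polysum (\<lambda>i. h (f i)) n \<noteq> \<one>\<^bsub>S\<^esub>"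
proof
  assume eq: "polysum (shift f) (Suc n) \<ominus>\<^bsub>S\<^esub> polysum (\<lambda>i. h (f i)) n = \<one>\<^bsub>S\<^esub>"
  define g where "g i = shift f i \<ominus> h (f i)" for i
  define e :: "nat \<Rightarrow> 'a" where "e i = (if i = 0 then \<one> else \<zero>)" for i
  have hf: "(\<lambda>i. h (f i)) \<in> UNIV \<rightarrow> carrier R" using f h by auto
  have "polysum g (Suc n) = polysum e (Suc n)"
    using eq polysum_minus[OF shift_closed[OF f] hf] polysum_Suc_zero[OF hf] assms(2,4)
    unfolding g_def e_def by (simp add: polysum_unit)
  moreover have "g \<in> UNIV \<rightarrow> carrier R" and "e \<in> UNIV \<rightarrow> carrier R"
    using shift_closed[OF f] hf by (auto simp: g_def e_def Pi_iff)
  ultimately have coeff: "g i = e i" if "i \<le> n" for i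
    using polysum_coeff_eq that by (meson le_imp_less_Suc)
  have "f i = \<zero>" if "i \<le> n" for i
    using that
  proof (induction rule: inc_induct)
    case (step i)
    \<comment> \<open>the coefficient of x^(i+1) is f i - h (f (i + 1))\<close>
    then have "f i \<ominus> \<zero> = \<zero>"
      using coeff[of "Suc i"] assms(4) by (simp add: g_def e_def)
    then show ?case using f by (simp add: Pi_iff)
  qed (rule assms(2))
  then have "g 0 = \<zero>" using assms(4) by (simp add: g_def)
  then show False using coeff[of 0] assms(5) by (simp add: e_def)
qed

lemma x_minus_iota_not_right_invertible:
  assumes "r \<in> carrier R" and "s \<in> carrier S" and "\<one> \<noteq> \<zero>"
  shows "(x \<ominus>\<^bsub>S\<^esub> \<iota> r) \<otimes>\<^bsub>S\<^esub> s \<noteq> \<one>\<^bsub>S\<^esub>"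
proof -
  obtain f n where f: "f \<in> UNIV \<rightarrow> carrier R" "f n = \<zero>" and s: "s = polysum f n"
    using polysum_representation[OF assms(2)] by blast
  have df: "(\<lambda>i. \<delta> (f i)) \<in> UNIV \<rightarrow> carrier R" and rf: "(\<lambda>i. r \<otimes> f i) \<in> UNIV \<rightarrow> carrier R"
    using f assms(1) by (auto simp: Pi_iff)
  have "(x \<ominus>\<^bsub>S\<^esub> \<iota> r) \<otimes>\<^bsub>S\<^esub> s = x \<otimes>\<^bsub>S\<^esub> s \<ominus>\<^bsub>S\<^esub> \<iota> r \<otimes>\<^bsub>S\<^esub> s"
    using assms by (simp add: S.minus_eq S.l_distr S.l_minus)
  also have "\<dots> = polysum (shift f) (Suc n) \<ominus>\<^bsub>S\<^esub> (polysum (\<lambda>i. r \<otimes> f i) n \<ominus>\<^bsub>S\<^esub> polysum (\<lambda>i. \<delta> (f i)) n)"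
    using f df rf assms(1) unfolding s
    by (simp add: x_mult_polysum iota_mult_polysum S.minus_eq S.minus_add S.a_ac)
  also have "\<dots> = polysum (shift f) (Suc n) \<ominus>\<^bsub>S\<^esub> polysum (\<lambda>i. r \<otimes> f i \<ominus> \<delta> (f i)) n"
    using df rf by (simp add: polysum_minus)
  finally show ?thesis
    using shift_minus_polysum_ne_one[OF f, of "\<lambda>a. r \<otimes> a \<ominus> \<delta> a"] assms(1,3) by auto
qed

lemma x_minus_iota_not_left_invertible:
  assumes "r \<in> carrier R" and "\<delta> r = \<zero>" and "s \<in> carrier S" and "\<one> \<noteq> \<zero>"
  shows "s \<otimes>\<^bsub>S\<^esub> (x \<ominus>\<^bsub>S\<^esub> \<iota> r) \<noteq> \<one>\<^bsub>S\<^esub>"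
proof -
  obtain f n where f: "f \<in> UNIV \<rightarrow> carrier R" "f n = \<zero>" and s: "s = polysum f n"
    using polysum_representation[OF assms(3)] by blast
  have "s \<otimes>\<^bsub>S\<^esub> (x \<ominus>\<^bsub>S\<^esub> \<iota> r) = s \<otimes>\<^bsub>S\<^esub> x \<ominus>\<^bsub>S\<^esub> s \<otimes>\<^bsub>S\<^esub> \<iota> r"
    using assms by (simp add: S.minus_eq S.r_distr S.r_minus)
  also have "\<dots> = polysum (shift f) (Suc n) \<ominus>\<^bsub>S\<^esub> polysum (\<lambda>i. f i \<otimes> r) n"
    using f assms(1,2) unfolding s by (simp add: polysum_mult_x polysum_mult_iota)
  finally show ?thesis
    using shift_minus_polysum_ne_one[OF f, of "\<lambda>a. a \<otimes> r"] assms(1,4) by auto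
qed

lemma x_minus_iota_commutator:
  assumes "r \<in> carrier R" and "s \<in> carrier R"
  shows "(x \<ominus>\<^bsub>S\<^esub> \<iota> r) \<otimes>\<^bsub>S\<^esub> \<iota> s \<ominus>\<^bsub>S\<^esub> \<iota> s \<otimes>\<^bsub>S\<^esub> (x \<ominus>\<^bsub>S\<^esub> \<iota> r)
    = \<iota> (\<delta> s \<ominus> (r \<otimes> s \<ominus> s \<otimes> r))"
  using assms
  by (simp add: S.minus_eq R.minus_eq S.l_distr S.r_distr S.l_minus S.r_minus x_commute
      S.minus_add R.minus_add hom_a_inv S.a_ac S.r_neg1 S.r_neg2)

lemma quasi_duo_imp_delta_inner:
  assumes "simple_ring R" and "left_quasi_duo S \<or> right_quasi_duo S"
    and "r \<in> carrier R" and "\<delta> r = \<zero>" and "s \<in> carrier R"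
  shows "\<delta> s = r \<otimes> s \<ominus> s \<otimes> r"
proof -
  have "\<one> \<noteq> \<zero>"
    using assms(1) R.one_zeroD unfolding simple_ring_def by blast
  obtain M where M: "ideal M S" "x \<ominus>\<^bsub>S\<^esub> \<iota> r \<in> M" "\<one>\<^bsub>S\<^esub> \<notin> M"
    using assms(2)
  proof
    assume "left_quasi_duo S"
    then show thesis
      using x_minus_iota_not_left_invertible assms(3,4) \<open>\<one> \<noteq> \<zero>\<close>
      by (intro S.left_quasi_duo_proper_ideal_containing[OF _ _ _ that]) auto
  next
    assume "right_quasi_duo S"
    then show thesis
      using x_minus_iota_not_right_invertible assms(3) \<open>\<one> \<noteq> \<zero>\<close>
      by (intro S.right_quasi_duo_proper_ideal_containing[OF _ _ _ that]) auto
  qed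
  interpret M: ideal M S by (rule M(1))
  have "(x \<ominus>\<^bsub>S\<^esub> \<iota> r) \<otimes>\<^bsub>S\<^esub> \<iota> s \<ominus>\<^bsub>S\<^esub> \<iota> s \<otimes>\<^bsub>S\<^esub> (x \<ominus>\<^bsub>S\<^esub> \<iota> r) \<in> M"
    using M(2) assms(5) by (simp add: S.minus_eq M.I_l_closed M.I_r_closed)
  then have "\<delta> s \<ominus> (r \<otimes> s \<ominus> s \<otimes> r) = \<zero>"
    using simple_ring_vimage_proper_ideal[OF assms(1) M(1,3)] x_minus_iota_commutator assms(3,5)
    by simp
  then show ?thesis using assms(3,5) by simp
qed

end

theorem lemma2p1:
  fixes R :: "('a, 'm) ring_scheme" and S :: "('b, 'n) ring_scheme"
    and \<delta> :: "'a \<Rightarrow> 'a" and \<iota> :: "'a \<Rightarrow> 'b" and x :: 'b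
  assumes "simple_ring R"
    and "derivation R \<delta>"
    and "diff_poly_ring R \<delta> S \<iota> x"
    and "left_quasi_duo S \<or> right_quasi_duo S"
  shows "field R \<and> (\<forall>r\<in>carrier R. \<delta> r = \<zero>\<^bsub>R\<^esub>)"
proof -
  have "ring R" "ring S" "\<iota> \<in> ring_hom R S"
    using assms(3) unfolding diff_poly_ring_def by blast+
  then interpret differential_polynomial_ring R S \<iota> \<delta> x
    using assms(2,3)
    by (intro differential_polynomial_ring.intro differential_polynomial_ring_axioms.intro
        ring_hom_ringI2)
  have delta_vanishes: "\<forall>s\<in>carrier R. \<delta> s = \<zero>\<^bsub>R\<^esub>"
    using quasi_duo_imp_delta_inner[OF assms(1,4) R.zero_closed] by simp
  have "a \<otimes>\<^bsub>R\<^esub> b = b \<otimes>\<^bsub>R\<^esub> a" if "a \<in> carrier R" and "b \<in> carrier R" for a b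
  proof -
    have "a \<otimes>\<^bsub>R\<^esub> b \<ominus>\<^bsub>R\<^esub> b \<otimes>\<^bsub>R\<^esub> a = \<zero>\<^bsub>R\<^esub>"
      using quasi_duo_imp_delta_inner[OF assms(1,4) that(1) _ that(2)] delta_vanishes that by simp
    then show ?thesis using that by simp
  qed
  then have "field R" by (rule simple_commutative_ring_is_field[OF assms(1)])
  with delta_vanishes show ?thesis by blast
qed

end
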